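(* Let $F$ be a Boolean formula over $n$ variables and let $1 \le m \le n$. If $\varphi_{stock}^F(m)$ is true, then $|\mathrm{Sol}(F)| \le m \cdot 2^m$.
   Context: $\mathrm{Sol}(F)\subseteq\{0,1\}^n$ denotes the set of satisfying assignments of $F$. For $n,m,k\ge 1$, $\mathcal{H}(n,m,k)$ denotes a fixed explicit $k$-wise independent family of hash functions $\{0,1\}^n\to\{0,1\}^m$: for $h$ drawn uniformly from $\mathcal{H}(n,m,k)$, all distinct $y_1,\dots,y_k\in\{0,1\}^n$ and all $\alpha_1,\dots,\alpha_k\in\{0,1\}^m$, $\Pr[h(y_1)=\alpha_1\wedge\cdots\wedge h(y_k)=\alpha_k]=2^{-mk}$. The statement $\varphi_{stock}^F(m)$ means: there exist $h_1,\dots,h_m\in\mathcal{H}(n,m,2)$ such that for every $z_1\in\mathrm{Sol}(F)$ there is an index $i\in\{1,\dots,m\}$ such that no $z_2\in\mathrm{Sol}(F)$ with $z_2\neq z_1$ satisfies $h_i(z_2)=h_i(z_1)$ (i.e. every solution is the only solution in its cell under some $h_i$). *)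

theory Defs
  imports Complex_Main
begin

datatype bform = BConst bool | BVar nat | BNot bform | BAnd bform bform | BOr bform bform

fun beval :: "bform \<Rightarrow> (nat \<Rightarrow> bool) \<Rightarrow> bool" where
  "beval (BConst b) \<sigma> = b"
| "beval (BVar i) \<sigma> = \<sigma> i"
| "beval (BNot f) \<sigma> = (\<not> beval f \<sigma>)"
| "beval (BAnd f g) \<sigma> = (beval f \<sigma> \<and> beval g \<sigma>)"
| "beval (BOr f g) \<sigma> = (beval f \<sigma> \<or> beval g \<sigma>)"

fun bvars :: "bform \<Rightarrow> nat set" where
  "bvars (BConst b) = {}"
| "bvars (BVar i) = {i}"
| "bvars (BNot f) = bvars f"
| "bvars (BAnd f g) = bvars f \<union> bvars g"
| "bvars (BOr f g) = bvars f \<union> bvars g"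

text \<open>Elements of {0,1}^n are bool lists of length n.\<close>
definition cube :: "nat \<Rightarrow> bool list set" where
  "cube n = {x. length x = n}"

definition Sol :: "bform \<Rightarrow> nat \<Rightarrow> bool list set" where
  "Sol F n = {x \<in> cube n. beval F (\<lambda>i. x ! i)}"

text \<open>H is a k-wise independent family of hash functions {0,1}^n \<rightarrow> {0,1}^m,
  with h drawn uniformly from the finite nonempty set H.\<close>
definition kwise_indep :: "nat \<Rightarrow> nat \<Rightarrow> nat \<Rightarrow> (bool list \<Rightarrow> bool list) set \<Rightarrow> bool" where
  "kwise_indep n m k H \<longleftrightarrow>
     finite H \<and> H \<noteq> {} \<and>
     (\<forall>h\<in>H. h ` cube n \<subseteq> cube m) \<and>
     (\<forall>ys as. length ys = k \<longrightarrow> length as = k \<longrightarrow> distinct ys \<longrightarrow>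
        set ys \<subseteq> cube n \<longrightarrow> set as \<subseteq> cube m \<longrightarrow>
        real (card {h\<in>H. \<forall>j<k. h (ys ! j) = as ! j}) / real (card H) = 1 / 2 ^ (m * k))"

definition phi_stock :: "(bool list \<Rightarrow> bool list) set \<Rightarrow> bform \<Rightarrow> nat \<Rightarrow> nat \<Rightarrow> bool" where
  "phi_stock H F n m \<longleftrightarrow>
     (\<exists>hs. length hs = m \<and> set hs \<subseteq> H \<and>
        (\<forall>z1\<in>Sol F n. \<exists>i<m. \<not> (\<exists>z2\<in>Sol F n. z2 \<noteq> z1 \<and> (hs ! i) z2 = (hs ! i) z1)))"

end

theory Submission
  imports Defs
begin

text \<open>Every solution is the only solution in its cell under some h_i, and the solutions
  isolated by a fixed h_i inject into its range {0,1}^m; with m hash functions this gives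
  at most m 2^m solutions.\<close>

lemma finite_cube: "finite (cube n)"
  using finite_lists_length_eq[of "UNIV :: bool set" n] by (simp add: cube_def)

lemma card_cube: "card (cube n) = 2 ^ n"
  using card_lists_length_eq[of "UNIV :: bool set" n] by (simp add: cube_def)

lemma kwise_indep_image_cube:
  assumes "kwise_indep n m k H" "h \<in> H"
  shows "h ` cube n \<subseteq> cube m"
  using assms by (simp add: kwise_indep_def)

lemma card_le_card_mult_card_if_isolating:
  assumes "finite G" "finite B"
    and maps: "\<And>g. g \<in> G \<Longrightarrow> g ` S \<subseteq> B"
    and isolating: "\<And>z. z \<in> S \<Longrightarrow> \<exists>g\<in>G. \<forall>z'\<in>S. g z' = g z \<longrightarrow> z' = z"
  shows "card S \<le> card G * card B"
proof -
  define isolated where "isolated (g :: 'a \<Rightarrow> 'b) = {z \<in> S. \<forall>z'\<in>S. g z' = g z \<longrightarrow> z' = z}" for g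
  have "S = (\<Union>g\<in>G. isolated g)"
    using isolating by (auto simp: isolated_def)
  then have "card S \<le> (\<Sum>g\<in>G. card (isolated g))"
    using card_UN_le[OF \<open>finite G\<close>] by metis
  also have "\<dots> \<le> (\<Sum>g\<in>G. card B)"
  proof (rule sum_mono)
    fix g assume "g \<in> G"
    have "inj_on g (isolated g)"
      by (rule inj_onI) (auto simp: isolated_def)
    moreover have "g ` isolated g \<subseteq> B"
      using maps[OF \<open>g \<in> G\<close>] by (auto simp: isolated_def)
    ultimately show "card (isolated g) \<le> card B"
      using card_inj_on_le[OF _ _ \<open>finite B\<close>] by blast
  qed
  finally show ?thesis by simp
qed

theorem claim3p1:
  fixes F :: bform and n m :: nat and H :: "(bool list \<Rightarrow> bool list) set"
  assumes "bvars F \<subseteq> {..<n}"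
    and "kwise_indep n m 2 H"
    and "1 \<le> m" and "m \<le> n"
    and "phi_stock H F n m"
  shows "card (Sol F n) \<le> m * 2 ^ m"
proof -
  obtain hs where hs: "length hs = m" "set hs \<subseteq> H"
    and stock: "\<forall>z1\<in>Sol F n. \<exists>i<m. \<not> (\<exists>z2\<in>Sol F n. z2 \<noteq> z1 \<and> (hs ! i) z2 = (hs ! i) z1)"
    using \<open>phi_stock H F n m\<close> unfolding phi_stock_def by blast
  have "Sol F n \<subseteq> cube n"
    by (auto simp: Sol_def)
  then have "h ` Sol F n \<subseteq> cube m" if "h \<in> set hs" for h
    using kwise_indep_image_cube[OF \<open>kwise_indep n m 2 H\<close>] hs(2) that by blast
  moreover have "\<exists>h\<in>set hs. \<forall>z'\<in>Sol F n. h z' = h z \<longrightarrow> z' = z" if "z \<in> Sol F n" for z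
    using stock that hs(1) by (metis nth_mem)
  ultimately have "card (Sol F n) \<le> card (set hs) * card (cube m)"
    by (intro card_le_card_mult_card_if_isolating) (simp_all add: finite_cube)
  also have "\<dots> \<le> m * 2 ^ m"
    using card_length[of hs] by (simp add: hs(1) card_cube)
  finally show ?thesis .
qed

end
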